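(* Let $d\in\mathbb{N}$ and suppose that $\mu_s(T_n)=\frac{s}{2}$ holds for every $n\le d$ and every $s\in\{1,\dots,n\}$. Then for every terminal $d$-polytope $T\subseteq\mathbb{R}^d$ and every $i\in\{1,\dots,d\}$, $\mu_i(T)=\frac{i}{2}$.
   Context: All covering minima are with respect to the integer lattice: for a convex body $K\subseteq\mathbb{R}^n$ and $i\in\{1,\dots,n\}$, $\mu_i(K)=\min\{\mu\ge0:(\mu K+\mathbb{Z}^n)\cap U\ne\emptyset$ for every $(n-i)$-dimensional affine subspace $U\subseteq\mathbb{R}^n\}$; covering minima are invariant under translations by $\mathbb{R}^n$. The standard terminal simplex is $T_n=\operatorname{conv}(-\mathbb{1}_n,e_1,\dots,e_n)\subseteq\mathbb{R}^n$. For sets $K\subseteq V$, $L\subseteq W$ containing the origin, with $\mathbb{R}^d=V\oplus W$, the direct sum is $K\oplus L=\{\lambda x+(1-\lambda)y:x\in K,y\in L,\lambda\in[0,1]\}$. A terminal $d$-polytope is a full-dimensional lattice polytope of the form $(u_1+T_{l_1})\oplus\cdots\oplus(u_k+T_{l_k})$ with respect to the coordinate decomposition $\mathbb{R}^d=\mathbb{R}^{l_1}\oplus\cdots\oplus\mathbb{R}^{l_k}$, $l_1+\dots+l_k=d$, where each translate $u_j+T_{l_j}$ ($u_j\in\mathbb{Z}^{l_j}$) contains the origin. *)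

theory Defs
  imports "HOL-Analysis.Analysis"
begin

text \<open>Points of R^n are represented as functions nat => real vanishing at all
  coordinates j >= n (coordinates are indexed 0..n-1).\<close>

definition Rn :: "nat \<Rightarrow> (nat \<Rightarrow> real) set" where
  "Rn n = {x. \<forall>j\<ge>n. x j = 0}"

definition Zn :: "nat \<Rightarrow> (nat \<Rightarrow> real) set" where
  "Zn n = {z. z \<in> Rn n \<and> (\<forall>j<n. z j \<in> \<int>)}"

definition affsub :: "nat \<Rightarrow> nat \<Rightarrow> (nat \<Rightarrow> real) set \<Rightarrow> bool" where
  "affsub n k U \<longleftrightarrow> (\<exists>a v. a \<in> Rn n \<and> (\<forall>l<k. v l \<in> Rn n) \<and>
     (\<forall>c. (\<lambda>j. \<Sum>l<k. c l * v l j) = (\<lambda>j. 0) \<longrightarrow> (\<forall>l<k. c l = 0)) \<and>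
     U = {(\<lambda>j. a j + (\<Sum>l<k. t l * v l j)) | t. True})"

definition covmin :: "nat \<Rightarrow> nat \<Rightarrow> (nat \<Rightarrow> real) set \<Rightarrow> real" where
  "covmin n i K = Inf {\<mu>::real. \<mu> \<ge> 0 \<and>
     (\<forall>U. affsub n (n - i) U \<longrightarrow> (\<exists>x\<in>K. \<exists>z\<in>Zn n. (\<lambda>j. \<mu> * x j + z j) \<in> U))}"

definition tsvert :: "nat \<Rightarrow> nat \<Rightarrow> (nat \<Rightarrow> real)" where
  "tsvert n l = (if l < n then (\<lambda>j. if j = l then 1 else 0)
                 else (\<lambda>j. if j < n then -1 else 0))"

definition tsimplex :: "nat \<Rightarrow> (nat \<Rightarrow> real) set" where
  "tsimplex n = {(\<lambda>j. \<Sum>l\<le>n. c l * tsvert n l j) | c.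
                   (\<forall>l\<le>n. c l \<ge> 0) \<and> (\<Sum>l\<le>n. c l) = 1}"

definition transl :: "(nat \<Rightarrow> real) \<Rightarrow> (nat \<Rightarrow> real) set \<Rightarrow> (nat \<Rightarrow> real) set" where
  "transl u K = {(\<lambda>j. u j + x j) | x. x \<in> K}"

definition shift :: "nat \<Rightarrow> (nat \<Rightarrow> real) set \<Rightarrow> (nat \<Rightarrow> real) set" where
  "shift off K = {(\<lambda>j. if off \<le> j then x (j - off) else 0) | x. x \<in> K}"

definition dsum :: "(nat \<Rightarrow> real) set \<Rightarrow> (nat \<Rightarrow> real) set \<Rightarrow> (nat \<Rightarrow> real) set" where
  "dsum K L = {(\<lambda>j. t * x j + (1 - t) * y j) | t x y. t \<in> {0..1} \<and> x \<in> K \<and> y \<in> L}"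

text \<open>(u_1 + T_{l_1}) \<oplus> ... \<oplus> (u_k + T_{l_k}), the j-th block occupying the
  consecutive coordinates after the previous blocks; the second argument is
  the coordinate offset of the first block.\<close>
fun tsum :: "(nat \<times> (nat \<Rightarrow> real)) list \<Rightarrow> nat \<Rightarrow> (nat \<Rightarrow> real) set" where
  "tsum [] off = {(\<lambda>j. 0)}"
| "tsum [(l, u)] off = shift off (transl u (tsimplex l))"
| "tsum ((l, u) # b # bs) off = dsum (shift off (transl u (tsimplex l))) (tsum (b # bs) (off + l))"

definition terminal_polytope :: "nat \<Rightarrow> (nat \<Rightarrow> real) set \<Rightarrow> bool" where
  "terminal_polytope d T \<longleftrightarrow> (\<exists>bs. bs \<noteq> [] \<and>
     (\<forall>(l, u) \<in> set bs. l \<ge> 1 \<and> u \<in> Zn l \<and> (\<lambda>j. 0) \<in> transl u (tsimplex l)) \<and>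
     sum_list (map fst bs) = d \<and> T = tsum bs 0)"

end

theory Submission
  imports Defs "HOL-Library.Function_Algebras"
begin

text \<open>
  Say that a star-shaped set \<open>K \<subseteq> \<real>\<^sup>n\<close> satisfies \<open>covmins_half n K\<close> if for every \<open>s \<le> n\<close>
  the radii \<open>\<mu> \<ge> 0\<close> for which \<open>\<mu>K + \<int>\<^sup>n\<close> meets every affine subspace of codimension \<open>s\<close>
  lie between \<open>]s/2, \<infinity>[\<close> and \<open>[s/2, \<infinity>[\<close>; then \<open>\<mu>\<^sub>s(K) = s/2\<close>. By hypothesis the translated
  terminal simplices satisfy it, and it passes from \<open>K\<close> and \<open>L \<subseteq> \<real>\<^sup>m\<close> to
  \<open>K \<oplus> L \<subseteq> \<real>\<^sup>n\<^sup>+\<^sup>m\<close>, which proves the theorem by induction over the blocks.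

  An affine subspace \<open>U\<close> of \<open>\<real>\<^sup>n\<^sup>+\<^sup>m\<close> fibres over its projection to \<open>\<real>\<^sup>n\<close> into parallel
  affine subspaces of \<open>\<real>\<^sup>m\<close>, and the codimensions \<open>s\<^sub>K\<close> of the projection and \<open>s\<^sub>L\<close> of the
  fibres add up to that of \<open>U\<close>. Hitting the projection with \<open>r\<^sub>K K + \<int>\<^sup>n\<close> and then the fibre
  over the hit point with \<open>r\<^sub>L L + \<int>\<^sup>m\<close> gives a point of \<open>(r\<^sub>K + r\<^sub>L)(K \<oplus> L) + \<int>\<^sup>n\<^sup>+\<^sup>m\<close> in
  \<open>U\<close>. Conversely, if \<open>U\<^sub>K\<close> and \<open>U\<^sub>L\<close> are missed by \<open>K\<close> and \<open>L\<close> at all radii up to \<open>r\<^sub>K\<close>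
  and \<open>r\<^sub>L\<close>, then \<open>U\<^sub>K \<times> U\<^sub>L\<close> is missed by \<open>K \<oplus> L\<close> at all radii up to \<open>r\<^sub>K + r\<^sub>L\<close>: a hit
  by \<open>\<tau>x + (1 - \<tau>)y\<close> at radius \<open>\<mu>\<close> yields hits of \<open>U\<^sub>K\<close> at \<open>\<mu>\<tau>\<close> and of \<open>U\<^sub>L\<close> at
  \<open>\<mu>(1 - \<tau>)\<close>.
\<close>

section \<open>Linear combinations of coordinate vectors\<close>

text \<open>The type \<^typ>\<open>nat \<Rightarrow> real\<close> has no \<^class>\<open>real_vector\<close> instance; pointwise scaling makes
  it a vector space for the locale \<^locale>\<open>vector_space\<close>, which supplies spans and dimension
  bounds.\<close>

definition scale_fun :: "real \<Rightarrow> (nat \<Rightarrow> real) \<Rightarrow> nat \<Rightarrow> real" where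
  "scale_fun r x = (\<lambda>j. r * x j)"

interpretation fvs: vector_space scale_fun
  by unfold_locales (auto simp: scale_fun_def fun_eq_iff algebra_simps)

definition lincomb :: "nat \<Rightarrow> (nat \<Rightarrow> real) \<Rightarrow> (nat \<Rightarrow> nat \<Rightarrow> real) \<Rightarrow> nat \<Rightarrow> real" where
  "lincomb k c v = (\<lambda>j. \<Sum>l<k. c l * v l j)"

definition indep :: "nat \<Rightarrow> (nat \<Rightarrow> nat \<Rightarrow> real) \<Rightarrow> bool" where
  "indep k v \<longleftrightarrow> (\<forall>c. lincomb k c v = 0 \<longrightarrow> (\<forall>l<k. c l = 0))"

lemma lincomb_apply: "lincomb k c v j = (\<Sum>l<k. c l * v l j)"
  by (simp add: lincomb_def)

lemma lincomb_eq_sum: "lincomb k c v = (\<Sum>l<k. scale_fun (c l) (v l))"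
  by (induction k) (simp_all add: lincomb_def scale_fun_def fun_eq_iff)

lemma lincomb_0 [simp]: "lincomb 0 c v = 0"
  by (simp add: lincomb_def fun_eq_iff)

lemma lincomb_zero_coeffs [simp]: "lincomb k (\<lambda>l. 0) v = 0"
  by (simp add: lincomb_def fun_eq_iff)

lemma lincomb_Suc: "lincomb (Suc k) c v = lincomb k c v + scale_fun (c k) (v k)"
  by (simp add: lincomb_def scale_fun_def fun_eq_iff)

lemma lincomb_cong:
  "(\<And>l. l < k \<Longrightarrow> c l = c' l) \<Longrightarrow> (\<And>l. l < k \<Longrightarrow> v l = v' l) \<Longrightarrow> lincomb k c v = lincomb k c' v'"
  unfolding lincomb_def by (intro ext sum.cong) auto

lemma lincomb_add: "lincomb k (\<lambda>l. c l + d l) v = lincomb k c v + lincomb k d v"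
  by (simp add: lincomb_def fun_eq_iff sum.distrib algebra_simps)

lemma lincomb_scale: "lincomb k (\<lambda>l. r * c l) v = scale_fun r (lincomb k c v)"
  by (simp add: lincomb_def scale_fun_def fun_eq_iff sum_distrib_left algebra_simps)

lemma lincomb_diff: "lincomb k (\<lambda>l. c l - d l) v = lincomb k c v - lincomb k d v"
  by (simp add: lincomb_def fun_eq_iff sum_subtractf algebra_simps)

lemma lincomb_unit:
  assumes "l < k" shows "lincomb k (\<lambda>i. if i = l then 1 else 0) v = v l"
proof
  fix j
  have "lincomb k (\<lambda>i. if i = l then 1 else 0) v j = (\<Sum>i<k. if i = l then v l j else 0)"
    unfolding lincomb_def by (intro sum.cong) auto
  then show "lincomb k (\<lambda>i. if i = l then 1 else 0) v j = v l j"
    using assms by simp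
qed

lemma lincomb_in_Rn: "(\<And>l. l < k \<Longrightarrow> v l \<in> Rn n) \<Longrightarrow> lincomb k c v \<in> Rn n"
  by (simp add: lincomb_def Rn_def)

lemma span_eq_range_lincomb: "fvs.span (v ` {..<k}) = range (\<lambda>c. lincomb k c v)"
proof
  have "fvs.subspace (range (\<lambda>c. lincomb k c v))"
    unfolding fvs.subspace_def
  proof (intro conjI ballI allI)
    show "0 \<in> range (\<lambda>c. lincomb k c v)"
      using lincomb_zero_coeffs by (metis rangeI)
  next
    fix x y assume "x \<in> range (\<lambda>c. lincomb k c v)" "y \<in> range (\<lambda>c. lincomb k c v)"
    then show "x + y \<in> range (\<lambda>c. lincomb k c v)"
      by (auto simp flip: lincomb_add)
  next
    fix r x assume "x \<in> range (\<lambda>c. lincomb k c v)"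
    then show "scale_fun r x \<in> range (\<lambda>c. lincomb k c v)"
      by (auto simp flip: lincomb_scale)
  qed
  moreover have "v ` {..<k} \<subseteq> range (\<lambda>c. lincomb k c v)"
    using lincomb_unit by (metis image_subsetI lessThan_iff rangeI)
  ultimately show "fvs.span (v ` {..<k}) \<subseteq> range (\<lambda>c. lincomb k c v)"
    by (rule fvs.span_minimal[rotated])
  show "range (\<lambda>c. lincomb k c v) \<subseteq> fvs.span (v ` {..<k})"
    unfolding lincomb_eq_sum
    by (intro image_subsetI fvs.span_sum fvs.span_scale fvs.span_base) simp
qed

lemma lincomb_Suc_in_range:
  assumes "x \<in> range (\<lambda>c. lincomb k c v)"
  shows "x + scale_fun g (v k) \<in> range (\<lambda>c. lincomb (Suc k) c v)"
proof -
  obtain c where "x = lincomb k c v" using assms by blast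
  moreover have "lincomb k (c(k := g)) v = lincomb k c v" by (rule lincomb_cong) auto
  ultimately have "x + scale_fun g (v k) = lincomb (Suc k) (c(k := g)) v"
    by (simp add: lincomb_Suc)
  then show ?thesis by blast
qed

lemma indep_cong: "(\<And>l. l < k \<Longrightarrow> v l = v' l) \<Longrightarrow> indep k v \<longleftrightarrow> indep k v'"
  unfolding indep_def by (metis (no_types, lifting) lincomb_cong)

lemma indep_Suc_iff:
  "indep (Suc k) v \<longleftrightarrow> indep k v \<and> v k \<notin> range (\<lambda>c. lincomb k c v)"
proof safe
  assume ind: "indep (Suc k) v"
  show "indep k v"
    unfolding indep_def
  proof (intro allI impI)
    fix c l assume "lincomb k c v = 0" "l < k"
    moreover have "lincomb k (c(k := 0)) v = lincomb k c v" by (rule lincomb_cong) auto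
    ultimately have "lincomb (Suc k) (c(k := 0)) v = 0" by (simp add: lincomb_Suc)
    with ind \<open>l < k\<close> show "c l = 0"
      unfolding indep_def by (metis fun_upd_apply less_SucI nat_neq_iff)
  qed
  fix c assume "v k = lincomb k c v"
  moreover have "lincomb k (c(k := -1)) v = lincomb k c v" by (rule lincomb_cong) auto
  ultimately have "lincomb (Suc k) (c(k := -1)) v = 0"
    by (simp add: lincomb_Suc scale_fun_def fun_eq_iff)
  with ind show False unfolding indep_def by (metis fun_upd_same lessI neg_one_neq_zero)
next
  assume ind: "indep k v" and notin: "v k \<notin> range (\<lambda>c. lincomb k c v)"
  show "indep (Suc k) v"
    unfolding indep_def
  proof (intro allI impI)
    fix c l assume c: "lincomb (Suc k) c v = 0" and "l < Suc k"
    have ck: "c k = 0"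
    proof (rule ccontr)
      assume "c k \<noteq> 0"
      have "v k = lincomb k (\<lambda>l. - c l / c k) v"
      proof
        fix j
        have "(\<Sum>l<k. c l * v l j) = - (c k * v k j)"
          using fun_cong[OF c, of j]
          by (simp add: lincomb_Suc lincomb_def scale_fun_def add_eq_0_iff)
        then show "v k j = lincomb k (\<lambda>l. - c l / c k) v j"
          using \<open>c k \<noteq> 0\<close> by (simp add: lincomb_def sum_negf flip: sum_divide_distrib)
      qed
      with notin show False by blast
    qed
    then have "lincomb k c v = 0" using c by (simp add: lincomb_Suc scale_fun_def zero_fun_def)
    with ind ck \<open>l < Suc k\<close> show "c l = 0" unfolding indep_def by (metis less_Suc_eq)
  qed
qed

lemma indep_inj_on:
  assumes "indep k v" shows "inj_on v {..<k}"
proof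
  fix a b assume ab: "a \<in> {..<k}" "b \<in> {..<k}" "v a = v b"
  have "lincomb k (\<lambda>i. (if i = a then 1 else 0) - (if i = b then 1 else 0)) v = 0"
    using ab by (simp add: lincomb_diff lincomb_unit)
  then have "(if a = a then 1 else 0) - (if a = b then 1 else 0) = (0::real)"
    using assms ab unfolding indep_def by blast
  then show "a = b" by (simp split: if_splits)
qed

lemma indep_imp_independent:
  assumes "indep k v" shows "fvs.independent (v ` {..<k})"
proof
  assume "fvs.dependent (v ` {..<k})"
  then obtain u where u: "\<exists>x\<in>v ` {..<k}. u x \<noteq> 0" "(\<Sum>x\<in>v ` {..<k}. scale_fun (u x) x) = 0"
    using fvs.dependent_finite by blast
  have "lincomb k (\<lambda>l. u (v l)) v = 0"
    using u(2) by (simp add: lincomb_eq_sum sum.reindex[OF indep_inj_on[OF assms]])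
  with assms u(1) show False unfolding indep_def by auto
qed

definition unit_vec :: "nat \<Rightarrow> nat \<Rightarrow> real" where
  "unit_vec l = (\<lambda>j. if j = l then 1 else 0)"

lemma lincomb_unit_vec: "lincomb k c unit_vec j = (if j < k then c j else 0)"
proof -
  have "lincomb k c unit_vec j = (\<Sum>l<k. if l = j then c j else 0)"
    unfolding lincomb_def unit_vec_def by (intro sum.cong) auto
  then show ?thesis by simp
qed

lemma indep_unit_vec: "indep k unit_vec"
  unfolding indep_def by (metis lincomb_unit_vec zero_fun_apply)

lemma Rn_subset_span_unit_vec: "Rn n \<subseteq> fvs.span (unit_vec ` {..<n})"
proof
  fix x assume "x \<in> Rn n"
  then have "x = lincomb n x unit_vec" by (simp add: lincomb_unit_vec Rn_def fun_eq_iff)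
  then show "x \<in> fvs.span (unit_vec ` {..<n})" unfolding span_eq_range_lincomb by blast
qed

lemma independent_in_Rn_card_le:
  assumes "fvs.independent B" "B \<subseteq> Rn n" shows "finite B \<and> card B \<le> n"
proof -
  have "finite B \<and> card B \<le> card (unit_vec ` {..<n})"
    using fvs.independent_span_bound[OF _ assms(1)] assms(2) Rn_subset_span_unit_vec by blast
  moreover have "card (unit_vec ` {..<n}) \<le> n" using card_image_le[of "{..<n}"] by simp
  ultimately show ?thesis by simp
qed

lemma indep_in_Rn_le:
  assumes "indep k v" "\<And>l. l < k \<Longrightarrow> v l \<in> Rn n" shows "k \<le> n"
proof -
  have "v ` {..<k} \<subseteq> Rn n" using assms(2) by auto
  then have "card (v ` {..<k}) \<le> n"
    using independent_in_Rn_card_le[OF indep_imp_independent[OF assms(1)]] by blast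
  then show ?thesis using card_image[OF indep_inj_on[OF assms(1)]] by simp
qed

lemma indep_spans_Rn:
  assumes "indep n v" "\<And>l. l < n \<Longrightarrow> v l \<in> Rn n" "x \<in> Rn n"
  shows "x \<in> range (\<lambda>c. lincomb n c v)"
proof (rule ccontr)
  let ?B = "v ` {..<n}"
  assume "x \<notin> range (\<lambda>c. lincomb n c v)"
  then have x: "x \<notin> fvs.span ?B" by (simp add: span_eq_range_lincomb)
  then have "x \<notin> ?B" by (metis fvs.span_base)
  have "fvs.independent (insert x ?B)"
    by (rule fvs.independent_insertI[OF x indep_imp_independent[OF assms(1)]])
  moreover have "insert x ?B \<subseteq> Rn n" using assms(2,3) by blast
  ultimately have "finite (insert x ?B) \<and> card (insert x ?B) \<le> n"
    by (rule independent_in_Rn_card_le)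
  moreover have "card ?B = n" using card_image[OF indep_inj_on[OF assms(1)]] by simp
  ultimately show False using \<open>x \<notin> ?B\<close> by simp
qed

lemma linear_lincomb:
  assumes "Vector_Spaces.linear scale_fun scale_fun p"
  shows "p (lincomb k c v) = lincomb k c (\<lambda>l. p (v l))"
proof -
  interpret p: Vector_Spaces.linear scale_fun scale_fun p by fact
  show ?thesis unfolding lincomb_eq_sum by (simp add: p.sum p.scale)
qed

section \<open>Splitting an independent family along a linear map\<close>

text \<open>An explicit form of rank-nullity for \<open>p\<close> on the span of \<open>v\<close>: the span contains an
  independent family \<open>y\<close> of \<open>k2\<close> vectors in the kernel of \<open>p\<close> and a family \<open>w\<close> of
  \<open>k1 = k - k2\<close> vectors with independent images under \<open>p\<close>.\<close>

definition split_along ::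
  "((nat \<Rightarrow> real) \<Rightarrow> nat \<Rightarrow> real) \<Rightarrow> nat \<Rightarrow> (nat \<Rightarrow> nat \<Rightarrow> real) \<Rightarrow>
   nat \<Rightarrow> (nat \<Rightarrow> nat \<Rightarrow> real) \<Rightarrow> nat \<Rightarrow> (nat \<Rightarrow> nat \<Rightarrow> real) \<Rightarrow> bool" where
  "split_along p k v k1 w k2 y \<longleftrightarrow> k1 + k2 = k \<and> indep k1 (\<lambda>l. p (w l)) \<and> indep k2 y \<and>
     (\<forall>l<k2. p (y l) = 0) \<and> (\<forall>c1 c2. lincomb k1 c1 w + lincomb k2 c2 y \<in> range (\<lambda>c. lincomb k c v))"

lemma split_along_Suc_kernel:
  assumes p: "Vector_Spaces.linear scale_fun scale_fun p" and v: "indep (Suc k) v"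
    and split: "split_along p k v k1 w k2 y"
    and \<alpha>: "p (v k) = lincomb k1 \<alpha> (\<lambda>l. p (w l))"
  shows "split_along p (Suc k) v k1 w (Suc k2) (y(k2 := v k - lincomb k1 \<alpha> w))"
proof -
  interpret p: Vector_Spaces.linear scale_fun scale_fun p by fact
  define y' where "y' = y(k2 := v k - lincomb k1 \<alpha> w)"
  have y'_prefix: "lincomb k2 c y' = lincomb k2 c y" for c
    by (rule lincomb_cong) (auto simp: y'_def)
  have span: "lincomb k1 c1 w + lincomb k2 c2 y \<in> range (\<lambda>c. lincomb k c v)" for c1 c2
    using split unfolding split_along_def by blast
  have "y' k2 \<notin> range (\<lambda>c. lincomb k2 c y')"
  proof
    assume "y' k2 \<in> range (\<lambda>c. lincomb k2 c y')"
    then obtain c where "y' k2 = lincomb k2 c y" by (auto simp: y'_prefix)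
    then have "v k = lincomb k1 \<alpha> w + lincomb k2 c y" by (simp add: y'_def algebra_simps)
    with span v show False unfolding indep_Suc_iff by metis
  qed
  then have "indep (Suc k2) y'"
    using split indep_cong[of k2 y y'] unfolding split_along_def indep_Suc_iff
    by (auto simp: y'_def)
  moreover have "p (y' k2) = 0"
    using \<alpha> by (simp add: y'_def p.diff linear_lincomb[OF p])
  moreover have "lincomb k1 c1 w + lincomb (Suc k2) c2 y' \<in> range (\<lambda>c. lincomb (Suc k) c v)"
    for c1 c2
  proof -
    have "lincomb k1 c1 w + lincomb (Suc k2) c2 y' =
        (lincomb k1 (\<lambda>l. c1 l - c2 k2 * \<alpha> l) w + lincomb k2 c2 y) + scale_fun (c2 k2) (v k)"
      unfolding lincomb_Suc y'_prefix
      by (simp add: y'_def lincomb_apply scale_fun_def fun_eq_iff sum_subtractf sum_distrib_left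
          algebra_simps)
    then show ?thesis using lincomb_Suc_in_range[OF span] by simp
  qed
  ultimately show ?thesis
    using split unfolding split_along_def y'_def by (auto simp: less_Suc_eq)
qed

lemma split_along_Suc_image:
  assumes split: "split_along p k v k1 w k2 y"
    and notin: "p (v k) \<notin> range (\<lambda>c. lincomb k1 c (\<lambda>l. p (w l)))"
  shows "split_along p (Suc k) v (Suc k1) (w(k1 := v k)) k2 y"
proof -
  define w' where "w' = w(k1 := v k)"
  have w'_prefix: "lincomb k1 c w' = lincomb k1 c w" for c
    by (rule lincomb_cong) (auto simp: w'_def)
  have "lincomb k1 c (\<lambda>l. p (w' l)) = lincomb k1 c (\<lambda>l. p (w l))" for c
    by (rule lincomb_cong) (auto simp: w'_def)
  then have "p (w' k1) \<notin> range (\<lambda>c. lincomb k1 c (\<lambda>l. p (w' l)))"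
    using notin by (simp add: w'_def)
  then have "indep (Suc k1) (\<lambda>l. p (w' l))"
    using split indep_cong[of k1 "\<lambda>l. p (w l)" "\<lambda>l. p (w' l)"]
    unfolding split_along_def indep_Suc_iff by (auto simp: w'_def)
  moreover have "lincomb (Suc k1) c1 w' + lincomb k2 c2 y \<in> range (\<lambda>c. lincomb (Suc k) c v)"
    for c1 c2
  proof -
    have "lincomb (Suc k1) c1 w' + lincomb k2 c2 y =
        (lincomb k1 c1 w + lincomb k2 c2 y) + scale_fun (c1 k1) (v k)"
      unfolding lincomb_Suc w'_prefix by (simp add: w'_def algebra_simps)
    then show ?thesis
      using lincomb_Suc_in_range split unfolding split_along_def by metis
  qed
  ultimately show ?thesis
    using split unfolding split_along_def w'_def by auto
qed

lemma split_along_exists: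
  assumes "Vector_Spaces.linear scale_fun scale_fun p" and "indep k v"
  shows "\<exists>k1 w k2 y. split_along p k v k1 w k2 y"
  using assms(2)
proof (induction k)
  case 0
  show ?case by (rule exI[of _ 0], rule exI, rule exI[of _ 0]) (simp add: split_along_def indep_def)
next
  case (Suc k)
  then obtain k1 w k2 y where split: "split_along p k v k1 w k2 y"
    using indep_Suc_iff by blast
  show ?case
  proof (cases "p (v k) \<in> range (\<lambda>c. lincomb k1 c (\<lambda>l. p (w l)))")
    case True
    then show ?thesis using split_along_Suc_kernel[OF assms(1) Suc.prems split] by blast
  next
    case False
    then show ?thesis using split_along_Suc_image[OF split] by blast
  qed
qed

section \<open>Blocks of coordinates\<close>

definition take_coords :: "nat \<Rightarrow> (nat \<Rightarrow> real) \<Rightarrow> nat \<Rightarrow> real" where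
  "take_coords n x = (\<lambda>j. if j < n then x j else 0)"

definition drop_coords :: "nat \<Rightarrow> (nat \<Rightarrow> real) \<Rightarrow> nat \<Rightarrow> real" where
  "drop_coords n x = (\<lambda>j. x (n + j))"

definition append_coords :: "nat \<Rightarrow> (nat \<Rightarrow> real) \<Rightarrow> (nat \<Rightarrow> real) \<Rightarrow> nat \<Rightarrow> real" where
  "append_coords n x y = (\<lambda>j. if j < n then x j else y (j - n))"

lemma append_take_drop [simp]: "append_coords n (take_coords n x) (drop_coords n x) = x"
  by (simp add: append_coords_def take_coords_def drop_coords_def fun_eq_iff)

lemma take_append [simp]: "take_coords n (append_coords n x y) = take_coords n x"
  by (simp add: append_coords_def take_coords_def fun_eq_iff)

lemma drop_append [simp]: "drop_coords n (append_coords n x y) = y"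
  by (simp add: append_coords_def drop_coords_def fun_eq_iff)

lemma append_coords_add [simp]:
  "append_coords n x y + append_coords n x' y' = append_coords n (x + x') (y + y')"
  by (simp add: append_coords_def fun_eq_iff)

lemma append_coords_zero [simp]: "append_coords n 0 0 = 0"
  by (simp add: append_coords_def fun_eq_iff)

lemma take_coords_zero [simp]: "take_coords n 0 = 0"
  by (simp add: take_coords_def fun_eq_iff)

lemma drop_coords_zero [simp]: "drop_coords n 0 = 0"
  by (simp add: drop_coords_def fun_eq_iff)

lemma take_coords_add [simp]: "take_coords n (x + y) = take_coords n x + take_coords n y"
  by (simp add: take_coords_def fun_eq_iff)

lemma drop_coords_add [simp]: "drop_coords n (x + y) = drop_coords n x + drop_coords n y"
  by (simp add: drop_coords_def fun_eq_iff)

lemma take_coords_Rn [simp]: "x \<in> Rn n \<Longrightarrow> take_coords n x = x"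
  by (simp add: take_coords_def Rn_def fun_eq_iff)

lemma take_coords_in_Rn: "take_coords n x \<in> Rn n"
  by (simp add: take_coords_def Rn_def)

lemma drop_coords_in_Rn: "x \<in> Rn (n + m) \<Longrightarrow> drop_coords n x \<in> Rn m"
  by (simp add: drop_coords_def Rn_def)

lemma append_coords_in_Rn: "y \<in> Rn m \<Longrightarrow> append_coords n x y \<in> Rn (n + m)"
  by (simp add: append_coords_def Rn_def)

lemma take_coords_in_Zn: "z \<in> Zn (n + m) \<Longrightarrow> take_coords n z \<in> Zn n"
  by (simp add: take_coords_def Zn_def Rn_def)

lemma drop_coords_in_Zn: "z \<in> Zn (n + m) \<Longrightarrow> drop_coords n z \<in> Zn m"
  by (simp add: drop_coords_def Zn_def Rn_def)

lemma append_coords_in_Zn: "z \<in> Zn n \<Longrightarrow> z' \<in> Zn m \<Longrightarrow> append_coords n z z' \<in> Zn (n + m)"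
  by (simp add: append_coords_def Zn_def Rn_def)

lemma linear_take_coords: "Vector_Spaces.linear scale_fun scale_fun (take_coords n)"
  unfolding Vector_Spaces.linear_iff
  by (simp add: fvs.vector_space_axioms take_coords_def scale_fun_def fun_eq_iff)

lemma lincomb_drop_coords: "lincomb k c (\<lambda>l. drop_coords n (v l)) = drop_coords n (lincomb k c v)"
  by (simp add: lincomb_def drop_coords_def)

lemma take_coords_lincomb_eq_0:
  assumes "\<And>l. l < k \<Longrightarrow> take_coords n (y l) = 0"
  shows "take_coords n (lincomb k c y) = 0"
proof -
  have "take_coords n (lincomb k c y) = lincomb k c (\<lambda>l. take_coords n (y l))"
    by (rule linear_lincomb[OF linear_take_coords])
  also have "\<dots> = 0"
    using assms by (simp add: lincomb_def zero_fun_def)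
  finally show ?thesis .
qed

lemma indep_drop_coords:
  assumes "indep k y" "\<And>l. l < k \<Longrightarrow> take_coords n (y l) = 0"
  shows "indep k (\<lambda>l. drop_coords n (y l))"
  unfolding indep_def
proof (intro allI impI)
  fix c l assume "lincomb k c (\<lambda>l. drop_coords n (y l)) = 0" "l < k"
  moreover have "take_coords n (lincomb k c y) = 0"
    using assms(2) by (rule take_coords_lincomb_eq_0)
  ultimately have "lincomb k c y = append_coords n 0 0"
    by (metis append_take_drop lincomb_drop_coords)
  then have "lincomb k c y = 0" by simp
  then show "c l = 0" using assms(1) \<open>l < k\<close> unfolding indep_def by blast
qed

definition append_families ::
  "nat \<Rightarrow> nat \<Rightarrow> (nat \<Rightarrow> nat \<Rightarrow> real) \<Rightarrow> (nat \<Rightarrow> nat \<Rightarrow> real) \<Rightarrow> nat \<Rightarrow> nat \<Rightarrow> real" where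
  "append_families n k1 w y l =
     (if l < k1 then append_coords n (w l) 0 else append_coords n 0 (y (l - k1)))"

lemma lincomb_append_families:
  "lincomb (k1 + k2) c (append_families n k1 w y)
   = append_coords n (lincomb k1 c w) (lincomb k2 (\<lambda>l. c (k1 + l)) y)"
proof -
  have sum_split: "(\<Sum>l<k1 + k2. f l) = (\<Sum>l<k1. f l) + (\<Sum>l<k2. f (k1 + l))" for f :: "nat \<Rightarrow> real"
    by (induction k2) (simp_all add: ac_simps)
  show ?thesis
    unfolding lincomb_def append_families_def append_coords_def fun_eq_iff sum_split by simp
qed

lemma append_families_in_Rn:
  "(\<And>l. l < k1 \<Longrightarrow> w l \<in> Rn n) \<Longrightarrow> (\<And>l. l < k2 \<Longrightarrow> y l \<in> Rn m) \<Longrightarrow> l < k1 + k2 \<Longrightarrow>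
   append_families n k1 w y l \<in> Rn (n + m)"
  by (auto simp: append_families_def Rn_def append_coords_def)

lemma indep_append_families:
  assumes w: "indep k1 w" "\<And>l. l < k1 \<Longrightarrow> w l \<in> Rn n" and y: "indep k2 y"
  shows "indep (k1 + k2) (append_families n k1 w y)"
  unfolding indep_def
proof (intro allI impI)
  fix t l assume t: "lincomb (k1 + k2) t (append_families n k1 w y) = 0" and "l < k1 + k2"
  have "take_coords n (lincomb k1 t w) = 0" "lincomb k2 (\<lambda>l. t (k1 + l)) y = 0"
    using arg_cong[OF t, of "take_coords n"] arg_cong[OF t, of "drop_coords n"]
    by (simp_all add: lincomb_append_families)
  then have "\<forall>l<k1. t l = 0" "\<forall>l<k2. t (k1 + l) = 0"
    using w y lincomb_in_Rn[of k1 w n] unfolding indep_def by auto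
  then show "t l = 0" using \<open>l < k1 + k2\<close> by (metis add_diff_inverse_nat nat_add_left_cancel_less)
qed

section \<open>Affine subspaces\<close>

lemma affsub_iff:
  "affsub n k U \<longleftrightarrow>
     (\<exists>a v. a \<in> Rn n \<and> (\<forall>l<k. v l \<in> Rn n) \<and> indep k v \<and> U = range (\<lambda>t. a + lincomb k t v))"
proof -
  have "(\<lambda>j. a j + (\<Sum>l<k. t l * v l j)) = a + lincomb k t v" for a t v
    by (simp add: lincomb_def fun_eq_iff)
  moreover have "(\<lambda>j. \<Sum>l<k. c l * v l j) = (\<lambda>j. 0) \<longleftrightarrow> lincomb k c v = 0" for c v
    by (simp add: lincomb_def zero_fun_def)
  ultimately show ?thesis
    unfolding affsub_def indep_def by (simp add: full_SetCompr_eq)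
qed

lemma affsubI:
  "a \<in> Rn n \<Longrightarrow> (\<And>l. l < k \<Longrightarrow> v l \<in> Rn n) \<Longrightarrow> indep k v \<Longrightarrow>
   affsub n k (range (\<lambda>t. a + lincomb k t v))"
  unfolding affsub_iff by (intro exI[of _ a] exI[of _ v]) simp

lemma affsubE:
  assumes "affsub n k U"
  obtains a v where "a \<in> Rn n" "\<And>l. l < k \<Longrightarrow> v l \<in> Rn n" "indep k v"
    "U = range (\<lambda>t. a + lincomb k t v)"
  using assms unfolding affsub_iff by auto

lemma affsub_nonempty: "affsub n k U \<Longrightarrow> U \<noteq> {}"
  by (elim affsubE) auto

lemma affsub_subset_Rn: "affsub n k U \<Longrightarrow> U \<subseteq> Rn n"
  by (elim affsubE) (auto simp: Rn_def lincomb_def)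

lemma affsub_le: "affsub n k U \<Longrightarrow> k \<le> n"
  by (elim affsubE) (rule indep_in_Rn_le)

lemma affsub_exists: "k \<le> n \<Longrightarrow> \<exists>U. affsub n k U"
proof -
  assume "k \<le> n"
  then have "affsub n k (range (\<lambda>t. 0 + lincomb k t unit_vec))"
    by (intro affsubI indep_unit_vec) (simp_all add: Rn_def unit_vec_def)
  then show ?thesis ..
qed

lemma affsub_full: "affsub n n U \<Longrightarrow> U = Rn n"
proof
  assume U: "affsub n n U"
  then show "U \<subseteq> Rn n" by (rule affsub_subset_Rn)
  obtain a v where av: "a \<in> Rn n" "\<And>l. l < n \<Longrightarrow> v l \<in> Rn n" "indep n v"
    "U = range (\<lambda>t. a + lincomb n t v)"
    using U by (elim affsubE) auto
  show "Rn n \<subseteq> U"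
  proof
    fix x assume "x \<in> Rn n"
    then have "x - a \<in> Rn n" using av(1) by (simp add: Rn_def)
    then obtain t where "x - a = lincomb n t v" using indep_spans_Rn[OF av(3,2)] by blast
    then have "x = a + lincomb n t v" by (simp add: algebra_simps)
    then show "x \<in> U" unfolding av(4) by blast
  qed
qed

lemma affsub_translate:
  assumes "affsub n k U" "b \<in> Rn n" shows "affsub n k ((+) b ` U)"
proof -
  obtain a v where av: "a \<in> Rn n" "\<And>l. l < k \<Longrightarrow> v l \<in> Rn n" "indep k v"
    "U = range (\<lambda>t. a + lincomb k t v)"
    using assms(1) by (elim affsubE) auto
  have "b + a \<in> Rn n" using av(1) assms(2) by (simp add: Rn_def)
  then have "affsub n k (range (\<lambda>t. (b + a) + lincomb k t v))"
    using av(2,3) by (rule affsubI)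
  then show ?thesis unfolding av(4) by (simp add: image_image add.assoc)
qed

lemma affsub_fibre:
  assumes b: "b \<in> Rn (n + m)" and y: "indep k y" "\<And>l. l < k \<Longrightarrow> y l \<in> Rn (n + m)"
    and ker: "\<And>l. l < k \<Longrightarrow> take_coords n (y l) = 0"
  shows "affsub m k (range (\<lambda>t. drop_coords n b + lincomb k t (\<lambda>l. drop_coords n (y l))))"
    and "append_coords n (take_coords n b) (drop_coords n b + lincomb k t (\<lambda>l. drop_coords n (y l)))
      = b + lincomb k t y" (is "?fibre_point = _")
proof -
  show "affsub m k (range (\<lambda>t. drop_coords n b + lincomb k t (\<lambda>l. drop_coords n (y l))))"
    using drop_coords_in_Rn[OF b] drop_coords_in_Rn[OF y(2)] indep_drop_coords[OF y(1) ker]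
    by (rule affsubI)
  have "take_coords n (lincomb k t y) = 0" using ker by (rule take_coords_lincomb_eq_0)
  then show "?fibre_point = b + lincomb k t y"
    using append_take_drop[of n "b + lincomb k t y"] by (simp add: lincomb_drop_coords)
qed

lemma affsub_fibres:
  assumes "affsub (n + m) k U"
  obtains k1 k2 UK where "k1 + k2 = k" "affsub n k1 UK"
    "\<And>p. p \<in> UK \<Longrightarrow> \<exists>F. affsub m k2 F \<and> (\<forall>q\<in>F. append_coords n p q \<in> U)"
proof -
  obtain a v where a: "a \<in> Rn (n + m)" and v: "\<And>l. l < k \<Longrightarrow> v l \<in> Rn (n + m)" "indep k v"
    and U: "U = range (\<lambda>t. a + lincomb k t v)"
    using assms by (elim affsubE) auto
  obtain k1 w k2 y where "split_along (take_coords n) k v k1 w k2 y"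
    using split_along_exists[OF linear_take_coords v(2)] by blast
  then have k: "k1 + k2 = k" and w: "indep k1 (\<lambda>l. take_coords n (w l))"
    and y: "indep k2 y" "\<And>l. l < k2 \<Longrightarrow> take_coords n (y l) = 0"
    and span: "\<And>c1 c2. lincomb k1 c1 w + lincomb k2 c2 y \<in> range (\<lambda>c. lincomb k c v)"
    unfolding split_along_def by auto
  have span_Rn: "lincomb k1 c1 w + lincomb k2 c2 y \<in> Rn (n + m)" for c1 c2
    using span[of c1 c2] lincomb_in_Rn[OF v(1)] by auto
  have y_Rn: "y l \<in> Rn (n + m)" if "l < k2" for l
    using span_Rn[of "\<lambda>_. 0" "\<lambda>i. if i = l then 1 else 0"] by (simp add: lincomb_unit[OF that])
  define UK where "UK = range (\<lambda>t. take_coords n a + lincomb k1 t (\<lambda>l. take_coords n (w l)))"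
  have "\<exists>F. affsub m k2 F \<and> (\<forall>q\<in>F. append_coords n p q \<in> U)" if "p \<in> UK" for p
  proof -
    obtain t1 where t1: "p = take_coords n a + lincomb k1 t1 (\<lambda>l. take_coords n (w l))"
      using \<open>p \<in> UK\<close> unfolding UK_def by blast
    define b where "b = a + lincomb k1 t1 w"
    have p: "p = take_coords n b"
      unfolding t1 b_def by (simp add: linear_lincomb[OF linear_take_coords])
    have b: "b \<in> Rn (n + m)"
      using a span_Rn[of t1 "\<lambda>_. 0"] unfolding b_def by (simp add: Rn_def)
    have "append_coords n p q \<in> U"
      if q: "q \<in> range (\<lambda>t. drop_coords n b + lincomb k2 t (\<lambda>l. drop_coords n (y l)))" for q
    proof -
      obtain t2 where "q = drop_coords n b + lincomb k2 t2 (\<lambda>l. drop_coords n (y l))"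
        using q by blast
      then have "append_coords n p q = a + (lincomb k1 t1 w + lincomb k2 t2 y)"
        using affsub_fibre(2)[OF b y(1) y_Rn y(2)] by (simp add: p b_def add.assoc)
      moreover obtain c where "lincomb k1 t1 w + lincomb k2 t2 y = lincomb k c v"
        using span[of t1 t2] by blast
      ultimately show ?thesis unfolding U by simp
    qed
    then show ?thesis using affsub_fibre(1)[OF b y(1) y_Rn y(2)] by blast
  qed
  moreover have "affsub n k1 UK"
    unfolding UK_def by (intro affsubI w take_coords_in_Rn)
  ultimately show thesis using that[OF k] by blast
qed

lemma affsub_append:
  assumes "affsub n k1 UK" "affsub m k2 UL"
  shows "affsub (n + m) (k1 + k2) ((\<lambda>(p, q). append_coords n p q) ` (UK \<times> UL))"
proof -
  obtain a1 w where a1: "a1 \<in> Rn n" and w: "\<And>l. l < k1 \<Longrightarrow> w l \<in> Rn n" "indep k1 w"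
    and UK: "UK = range (\<lambda>t. a1 + lincomb k1 t w)"
    using assms(1) by (elim affsubE) auto
  obtain a2 y where a2: "a2 \<in> Rn m" and y: "\<And>l. l < k2 \<Longrightarrow> y l \<in> Rn m" "indep k2 y"
    and UL: "UL = range (\<lambda>t. a2 + lincomb k2 t y)"
    using assms(2) by (elim affsubE) auto
  let ?V = "append_families n k1 w y"
  have "(\<lambda>(p, q). append_coords n p q) ` (UK \<times> UL) =
      range (\<lambda>t. append_coords n a1 a2 + lincomb (k1 + k2) t ?V)"
  proof (rule set_eqI, rule iffI)
    fix x assume "x \<in> (\<lambda>(p, q). append_coords n p q) ` (UK \<times> UL)"
    then obtain t1 t2 where x: "x = append_coords n (a1 + lincomb k1 t1 w) (a2 + lincomb k2 t2 y)"
      unfolding UK UL by auto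
    define t where "t l = (if l < k1 then t1 l else t2 (l - k1))" for l
    have "lincomb k1 t w = lincomb k1 t1 w" "lincomb k2 (\<lambda>l. t (k1 + l)) y = lincomb k2 t2 y"
      by (rule lincomb_cong; simp add: t_def)+
    then have "x = append_coords n a1 a2 + lincomb (k1 + k2) t ?V"
      by (simp add: x lincomb_append_families)
    then show "x \<in> range (\<lambda>t. append_coords n a1 a2 + lincomb (k1 + k2) t ?V)" by blast
  next
    fix x assume "x \<in> range (\<lambda>t. append_coords n a1 a2 + lincomb (k1 + k2) t ?V)"
    then obtain t
      where "x = append_coords n (a1 + lincomb k1 t w) (a2 + lincomb k2 (\<lambda>l. t (k1 + l)) y)"
      by (auto simp: lincomb_append_families)
    then show "x \<in> (\<lambda>(p, q). append_coords n p q) ` (UK \<times> UL)"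
      unfolding UK UL by blast
  qed
  moreover have
    "affsub (n + m) (k1 + k2) (range (\<lambda>t. append_coords n a1 a2 + lincomb (k1 + k2) t ?V))"
    using append_coords_in_Rn[OF a2] append_families_in_Rn[OF w(1) y(1)]
      indep_append_families[OF w(2,1) y(2)]
    by (rule affsubI)
  ultimately show ?thesis by simp
qed

section \<open>Covering sets\<close>

definition meets :: "nat \<Rightarrow> real \<Rightarrow> (nat \<Rightarrow> real) set \<Rightarrow> (nat \<Rightarrow> real) set \<Rightarrow> bool" where
  "meets n \<mu> K U \<longleftrightarrow> (\<exists>x\<in>K. \<exists>z\<in>Zn n. scale_fun \<mu> x + z \<in> U)"

definition covering_set :: "nat \<Rightarrow> nat \<Rightarrow> (nat \<Rightarrow> real) set \<Rightarrow> real set" where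
  "covering_set n s K = {\<mu>. 0 \<le> \<mu> \<and> (\<forall>U. affsub n (n - s) U \<longrightarrow> meets n \<mu> K U)}"

definition star_shaped0 :: "(nat \<Rightarrow> real) set \<Rightarrow> bool" where
  "star_shaped0 K \<longleftrightarrow> 0 \<in> K \<and> (\<forall>x\<in>K. \<forall>t. 0 \<le> t \<longrightarrow> t \<le> 1 \<longrightarrow> scale_fun t x \<in> K)"

lemma covmin_eq_Inf: "covmin n s K = Inf (covering_set n s K)"
proof -
  have "(\<lambda>j. \<mu> * x j + z j) = scale_fun \<mu> x + z" for \<mu> x z
    by (simp add: scale_fun_def fun_eq_iff)
  then show ?thesis unfolding covmin_def covering_set_def meets_def by simp
qed

lemma meets_mono:
  assumes "star_shaped0 K" "0 \<le> \<mu>" "\<mu> \<le> \<mu>'" "meets n \<mu> K U"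
  shows "meets n \<mu>' K U"
proof (cases "\<mu> = \<mu>'")
  case False
  then have "0 < \<mu>'" using assms(2,3) by simp
  obtain x z where x: "x \<in> K" "z \<in> Zn n" "scale_fun \<mu> x + z \<in> U"
    using assms(4) unfolding meets_def by blast
  have "scale_fun (\<mu> / \<mu>') x \<in> K"
    using assms(1-3) x(1) \<open>0 < \<mu>'\<close> unfolding star_shaped0_def by simp
  moreover have "scale_fun \<mu>' (scale_fun (\<mu> / \<mu>') x) = scale_fun \<mu> x"
    using \<open>0 < \<mu>'\<close> by (simp add: scale_fun_def)
  ultimately show ?thesis using x(2,3) unfolding meets_def by metis
qed (use assms in simp)

lemma covering_set_mono:
  "star_shaped0 K \<Longrightarrow> \<mu> \<in> covering_set n s K \<Longrightarrow> \<mu> \<le> \<mu>' \<Longrightarrow> \<mu>' \<in> covering_set n s K"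
  unfolding covering_set_def using meets_mono by fastforce

lemma covering_set_codim_0: "0 \<in> K \<Longrightarrow> 0 \<le> \<mu> \<Longrightarrow> \<mu> \<in> covering_set n 0 K"
proof -
  assume "0 \<in> K" "0 \<le> \<mu>"
  have "meets n \<mu> K U" if "affsub n n U" for U
  proof -
    have "scale_fun \<mu> 0 + 0 \<in> U"
      using affsub_full[OF that] by (simp add: scale_fun_def zero_fun_def Rn_def)
    moreover have "(0 :: nat \<Rightarrow> real) \<in> Zn n" by (simp add: Zn_def Rn_def)
    ultimately show ?thesis using \<open>0 \<in> K\<close> unfolding meets_def by blast
  qed
  then show ?thesis using \<open>0 \<le> \<mu>\<close> unfolding covering_set_def by simp
qed

lemma transl_eq_image: "transl u K = (+) u ` K"
  unfolding transl_def plus_fun_def by auto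

lemma meets_transl: "meets n \<mu> (transl u K) U \<longleftrightarrow> meets n \<mu> K ((+) (- scale_fun \<mu> u) ` U)"
proof -
  have "scale_fun \<mu> (u + x) + z = scale_fun \<mu> u + (scale_fun \<mu> x + z)" for x z
    by (simp add: scale_fun_def fun_eq_iff algebra_simps)
  then have "scale_fun \<mu> (u + x) + z \<in> U \<longleftrightarrow> scale_fun \<mu> x + z \<in> (+) (- scale_fun \<mu> u) ` U" for x z
    by (auto simp: image_iff algebra_simps)
  then show ?thesis unfolding meets_def transl_eq_image by auto
qed

lemma covering_set_transl:
  assumes "u \<in> Rn n" shows "covering_set n s (transl u K) = covering_set n s K"
proof -
  have scaled: "scale_fun \<mu> u \<in> Rn n" "- scale_fun \<mu> u \<in> Rn n" for \<mu>
    using assms by (simp_all add: scale_fun_def Rn_def)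
  have "(\<forall>U. affsub n (n - s) U \<longrightarrow> meets n \<mu> (transl u K) U) \<longleftrightarrow>
      (\<forall>U. affsub n (n - s) U \<longrightarrow> meets n \<mu> K U)" for \<mu>
  proof safe
    fix U assume "\<forall>U. affsub n (n - s) U \<longrightarrow> meets n \<mu> (transl u K) U" "affsub n (n - s) U"
    then have "meets n \<mu> (transl u K) ((+) (scale_fun \<mu> u) ` U)"
      using affsub_translate scaled(1) by blast
    then show "meets n \<mu> K U" by (simp add: meets_transl image_image)
  next
    fix U assume "\<forall>U. affsub n (n - s) U \<longrightarrow> meets n \<mu> K U" "affsub n (n - s) U"
    then have "meets n \<mu> K ((+) (- scale_fun \<mu> u) ` U)"
      using affsub_translate scaled(2) by blast
    then show "meets n \<mu> (transl u K) U" unfolding meets_transl .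
  qed
  then show ?thesis unfolding covering_set_def by simp
qed

lemma star_shaped0_transl:
  assumes convex: "\<And>x x' t. x \<in> K \<Longrightarrow> x' \<in> K \<Longrightarrow> 0 \<le> t \<Longrightarrow> t \<le> 1 \<Longrightarrow>
      (\<lambda>j. t * x j + (1 - t) * x' j) \<in> K"
    and "0 \<in> transl u K"
  shows "star_shaped0 (transl u K)"
proof -
  have "- u \<in> K" using assms(2) unfolding transl_eq_image by (auto simp: add_eq_0_iff)
  have "scale_fun t (u + x) \<in> transl u K" if "x \<in> K" "0 \<le> t" "t \<le> 1" for x t
  proof -
    have "(\<lambda>j. t * x j + (1 - t) * (- u) j) \<in> K" using convex[OF that(1) \<open>- u \<in> K\<close> that(2,3)] .
    moreover have "scale_fun t (u + x) = u + (\<lambda>j. t * x j + (1 - t) * (- u) j)"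
      by (simp add: scale_fun_def fun_eq_iff algebra_simps)
    ultimately show ?thesis unfolding transl_eq_image by simp
  qed
  then show ?thesis using assms(2) unfolding star_shaped0_def transl_eq_image by auto
qed

text \<open>The two inclusions express \<open>\<mu>\<^sub>s(K) = s/2\<close> without reference to whether the infimum
  is attained, which is the form that survives direct sums.\<close>

definition covmins_half :: "nat \<Rightarrow> (nat \<Rightarrow> real) set \<Rightarrow> bool" where
  "covmins_half n K \<longleftrightarrow> K \<subseteq> Rn n \<and> star_shaped0 K \<and>
     (\<forall>s\<le>n. {real s / 2<..} \<subseteq> covering_set n s K \<and> covering_set n s K \<subseteq> {real s / 2..})"

lemma covmin_covmins_half:
  assumes "covmins_half n K" "s \<le> n" shows "covmin n s K = real s / 2"
proof -
  let ?S = "covering_set n s K"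
  have S: "{real s / 2<..} \<subseteq> ?S" "?S \<subseteq> {real s / 2..}"
    using assms unfolding covmins_half_def by auto
  then have "?S \<noteq> {}" "bdd_below ?S" by (auto simp: bdd_below_def)
  have "real s / 2 \<le> Inf ?S" using S(2) by (intro cInf_greatest[OF \<open>?S \<noteq> {}\<close>]) auto
  moreover have "Inf ?S \<le> Inf {real s / 2<..}"
    using S(1) \<open>bdd_below ?S\<close> by (intro cInf_superset_mono) auto
  ultimately show ?thesis unfolding covmin_eq_Inf by simp
qed

lemma covmins_halfI:
  assumes "K \<subseteq> Rn n" "star_shaped0 K"
    and "\<And>s. 1 \<le> s \<Longrightarrow> s \<le> n \<Longrightarrow> covering_set n s K \<noteq> {} \<and> covmin n s K = real s / 2"
  shows "covmins_half n K"
proof -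
  have "{real s / 2<..} \<subseteq> covering_set n s K \<and> covering_set n s K \<subseteq> {real s / 2..}"
    if "s \<le> n" for s
  proof (cases "s = 0")
    case True
    then show ?thesis using assms(2) covering_set_codim_0[of K]
      unfolding star_shaped0_def covering_set_def by auto
  next
    case False
    let ?S = "covering_set n s K"
    have ne: "?S \<noteq> {}" and inf: "Inf ?S = real s / 2"
      using assms(3)[of s] False that by (auto simp: covmin_eq_Inf)
    have "bdd_below ?S" unfolding covering_set_def bdd_below_def by auto
    then have "?S \<subseteq> {real s / 2..}" using inf cInf_lower[of _ ?S] by fastforce
    moreover have "\<mu> \<in> ?S" if \<mu>: "real s / 2 < \<mu>" for \<mu>
    proof -
      obtain \<mu>0 where "\<mu>0 \<in> ?S" "\<mu>0 < \<mu>" using cInf_lessD[OF ne] inf \<mu> by auto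
      then show ?thesis using covering_set_mono[OF assms(2)] by force
    qed
    ultimately show ?thesis by auto
  qed
  then show ?thesis using assms(1,2) unfolding covmins_half_def by blast
qed

lemma covmins_half_missed:
  assumes "covmins_half n K" "s \<le> n" "r < real s / 2"
  shows "\<exists>U. affsub n (n - s) U \<and> (\<forall>\<mu>. 0 \<le> \<mu> \<longrightarrow> \<mu> \<le> r \<longrightarrow> \<not> meets n \<mu> K U)"
proof (cases "0 \<le> r")
  case True
  have "r \<notin> covering_set n s K" using assms unfolding covmins_half_def by fastforce
  then obtain U where "affsub n (n - s) U" "\<not> meets n r K U"
    using True unfolding covering_set_def by blast
  moreover have "star_shaped0 K" using assms(1) unfolding covmins_half_def by blast
  ultimately show ?thesis using meets_mono by blast
next
  case False
  then show ?thesis using affsub_exists[of "n - s" n] by auto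
qed

section \<open>Direct sums\<close>

lemma shift_eq_image: "shift n L = append_coords n 0 ` L"
proof -
  have "(\<lambda>j. if n \<le> j then y (j - n) else 0) = append_coords n 0 y" for y
    by (simp add: append_coords_def fun_eq_iff)
  then show ?thesis unfolding shift_def by auto
qed

lemma shift_0: "shift 0 K = K"
  unfolding shift_eq_image by (simp add: append_coords_def)

lemma shift_shift: "shift a (shift b K) = shift (a + b) K"
proof -
  have "append_coords a 0 (append_coords b 0 x) = append_coords (a + b) 0 x" for x
    by (auto simp: append_coords_def fun_eq_iff)
  then show ?thesis unfolding shift_eq_image image_image by simp
qed

lemma shift_subset_Rn: "L \<subseteq> Rn m \<Longrightarrow> shift n L \<subseteq> Rn (n + m)"
  unfolding shift_eq_image using append_coords_in_Rn by blast

lemma star_shaped0_shift: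
  assumes "star_shaped0 L" shows "star_shaped0 (shift n L)"
  unfolding star_shaped0_def
proof (intro conjI ballI allI impI)
  show "0 \<in> shift n L"
    using assms unfolding star_shaped0_def shift_eq_image by (metis imageI append_coords_zero)
next
  fix Y and t :: real assume "Y \<in> shift n L" "0 \<le> t" "t \<le> 1"
  then obtain y where "y \<in> L" "Y = append_coords n 0 y" unfolding shift_eq_image by blast
  moreover have "scale_fun t (append_coords n 0 y) = append_coords n 0 (scale_fun t y)"
    by (simp add: scale_fun_def append_coords_def fun_eq_iff)
  moreover have "scale_fun t y \<in> L"
    using assms \<open>y \<in> L\<close> \<open>0 \<le> t\<close> \<open>t \<le> 1\<close> unfolding star_shaped0_def by blast
  ultimately show "scale_fun t Y \<in> shift n L" unfolding shift_eq_image by simp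
qed

lemma dsumI: "t \<in> {0..1} \<Longrightarrow> x \<in> K \<Longrightarrow> y \<in> L \<Longrightarrow> (\<lambda>j. t * x j + (1 - t) * y j) \<in> dsum K L"
  unfolding dsum_def by blast

lemma dsumE:
  assumes "X \<in> dsum K L"
  obtains t x y where "X = (\<lambda>j. t * x j + (1 - t) * y j)" "0 \<le> t" "t \<le> 1" "x \<in> K" "y \<in> L"
  using assms unfolding dsum_def by auto

lemma shift_dsum: "shift n (dsum K L) = dsum (shift n K) (shift n L)"
proof -
  have shift_comb: "append_coords n 0 (\<lambda>j. t * x j + (1 - t) * y j) =
      (\<lambda>j. t * append_coords n 0 x j + (1 - t) * append_coords n 0 y j)" for t x y
    by (simp add: append_coords_def fun_eq_iff)
  show ?thesis
  proof (rule set_eqI, rule iffI)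
    fix X assume "X \<in> shift n (dsum K L)"
    then obtain t x y where "X = append_coords n 0 (\<lambda>j. t * x j + (1 - t) * y j)"
      "0 \<le> t" "t \<le> 1" "x \<in> K" "y \<in> L"
      unfolding shift_eq_image by (auto elim: dsumE)
    then show "X \<in> dsum (shift n K) (shift n L)"
      unfolding shift_comb shift_eq_image by (auto intro!: dsumI)
  next
    fix X assume "X \<in> dsum (shift n K) (shift n L)"
    then obtain t x y where "X = (\<lambda>j. t * append_coords n 0 x j + (1 - t) * append_coords n 0 y j)"
      "0 \<le> t" "t \<le> 1" "x \<in> K" "y \<in> L"
      unfolding shift_eq_image by (auto elim!: dsumE)
    then show "X \<in> shift n (dsum K L)"
      unfolding shift_comb[symmetric] shift_eq_image by (auto intro!: imageI dsumI)
  qed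
qed

lemma dsum_subset_Rn: "K \<subseteq> Rn N \<Longrightarrow> L \<subseteq> Rn N \<Longrightarrow> dsum K L \<subseteq> Rn N"
  unfolding dsum_def Rn_def by (auto simp: subset_iff)

lemma star_shaped0_dsum:
  assumes "star_shaped0 K" "star_shaped0 L" shows "star_shaped0 (dsum K L)"
proof -
  have "(\<lambda>j. 1 * 0 + (1 - 1) * 0) \<in> dsum K L"
    using assms unfolding star_shaped0_def by (intro dsumI) (auto simp: zero_fun_def)
  then have "0 \<in> dsum K L" by (simp add: zero_fun_def)
  moreover have "scale_fun t X \<in> dsum K L" if X: "X \<in> dsum K L" and t: "0 \<le> t" "t \<le> 1" for X t
  proof -
    obtain \<tau> x y where "X = (\<lambda>j. \<tau> * x j + (1 - \<tau>) * y j)" "0 \<le> \<tau>" "\<tau> \<le> 1" "x \<in> K" "y \<in> L"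
      using X by (rule dsumE)
    moreover have "scale_fun t x \<in> K" "scale_fun t y \<in> L"
      using assms t \<open>x \<in> K\<close> \<open>y \<in> L\<close> unfolding star_shaped0_def by auto
    ultimately show ?thesis
      using dsumI[of \<tau> "scale_fun t x" K "scale_fun t y" L]
      by (simp add: scale_fun_def algebra_simps)
  qed
  ultimately show ?thesis unfolding star_shaped0_def by blast
qed

lemma dsum_weighted_point:
  assumes "x \<in> K" "y \<in> L" "0 \<le> a" "0 \<le> b"
  shows "\<exists>X\<in>dsum K L. scale_fun (a + b) X = scale_fun a x + scale_fun b y"
proof (cases "a + b = 0")
  case True
  have "(\<lambda>j. 1 * x j + (1 - 1) * y j) \<in> dsum K L"
    using assms(1,2) by (intro dsumI) auto
  moreover have "a = 0" "b = 0" using True assms(3,4) by auto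
  ultimately show ?thesis by (auto simp: scale_fun_def fun_eq_iff)
next
  case False
  define \<tau> where "\<tau> = a / (a + b)"
  have "\<tau> \<in> {0..1}" using assms(3,4) False unfolding \<tau>_def by auto
  then have "(\<lambda>j. \<tau> * x j + (1 - \<tau>) * y j) \<in> dsum K L"
    using assms(1,2) by (rule dsumI)
  moreover have "(a + b) * \<tau> = a" "(a + b) * (1 - \<tau>) = b"
    using False unfolding \<tau>_def by (simp_all add: field_simps)
  ultimately show ?thesis
    by (intro bexI[of _ "\<lambda>j. \<tau> * x j + (1 - \<tau>) * y j"])
      (auto simp: scale_fun_def fun_eq_iff distrib_left simp flip: mult.assoc)
qed

lemma meets_dsumI:
  assumes "K \<subseteq> Rn n" "x \<in> K" "y \<in> L" "z \<in> Zn n" "z' \<in> Zn m" "0 \<le> a" "0 \<le> b"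
    and U: "append_coords n (scale_fun a x + z) (scale_fun b y + z') \<in> U"
  shows "meets (n + m) (a + b) (dsum K (shift n L)) U"
proof -
  have "append_coords n 0 y \<in> shift n L" using assms(3) by (simp add: shift_eq_image)
  then obtain X where X: "X \<in> dsum K (shift n L)"
    "scale_fun (a + b) X = scale_fun a x + scale_fun b (append_coords n 0 y)"
    using dsum_weighted_point[OF assms(2) _ assms(6,7)] by blast
  have "x j = 0" if "n \<le> j" for j using assms(1,2) that unfolding Rn_def by auto
  then have "scale_fun (a + b) X + append_coords n z z' =
      append_coords n (scale_fun a x + z) (scale_fun b y + z')"
    unfolding X(2) by (auto simp: scale_fun_def append_coords_def fun_eq_iff)
  then show ?thesis
    using X(1) append_coords_in_Zn[OF assms(4,5)] U unfolding meets_def by metis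
qed

lemma meets_dsumD:
  assumes "K \<subseteq> Rn n" "UK \<subseteq> Rn n"
    and "meets (n + m) \<mu> (dsum K (shift n L)) ((\<lambda>(p, q). append_coords n p q) ` (UK \<times> UL))"
  shows "\<exists>\<tau>. 0 \<le> \<tau> \<and> \<tau> \<le> 1 \<and> meets n (\<mu> * \<tau>) K UK \<and> meets m (\<mu> * (1 - \<tau>)) L UL"
proof -
  obtain X Z p q where X: "X \<in> dsum K (shift n L)" and Z: "Z \<in> Zn (n + m)"
    and pq: "p \<in> UK" "q \<in> UL" and eq: "scale_fun \<mu> X + Z = append_coords n p q"
    using assms(3) unfolding meets_def by auto
  obtain \<tau> x Y where X_eq: "X = (\<lambda>j. \<tau> * x j + (1 - \<tau>) * Y j)"
    and \<tau>: "0 \<le> \<tau>" "\<tau> \<le> 1" and x: "x \<in> K" and Y: "Y \<in> shift n L"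
    using X by (rule dsumE)
  obtain y where y: "y \<in> L" and Y_eq: "Y = append_coords n 0 y"
    using Y unfolding shift_eq_image by blast
  have x0: "x j = 0" if "n \<le> j" for j using assms(1) x that unfolding Rn_def by auto
  have "scale_fun (\<mu> * \<tau>) x + take_coords n Z = take_coords n (scale_fun \<mu> X + Z)"
    using x0 by (auto simp: X_eq Y_eq scale_fun_def take_coords_def append_coords_def fun_eq_iff)
  then have "scale_fun (\<mu> * \<tau>) x + take_coords n Z \<in> UK"
    using pq(1) assms(2) by (auto simp: eq)
  then have "meets n (\<mu> * \<tau>) K UK"
    using x take_coords_in_Zn[OF Z] unfolding meets_def by blast
  moreover have "scale_fun (\<mu> * (1 - \<tau>)) y + drop_coords n Z = drop_coords n (scale_fun \<mu> X + Z)"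
    using x0 by (auto simp: X_eq Y_eq scale_fun_def drop_coords_def append_coords_def fun_eq_iff)
  then have "scale_fun (\<mu> * (1 - \<tau>)) y + drop_coords n Z \<in> UL"
    using pq(2) by (simp add: eq)
  then have "meets m (\<mu> * (1 - \<tau>)) L UL"
    using y drop_coords_in_Zn[OF Z] unfolding meets_def by blast
  ultimately show ?thesis using \<tau> by blast
qed

lemma covering_set_dsum_upper:
  assumes K: "K \<subseteq> Rn n" and s: "s \<le> n + m"
    and radii: "\<And>sK sL. sK \<le> n \<Longrightarrow> sL \<le> m \<Longrightarrow> sK + sL = s \<Longrightarrow>
      \<exists>rK rL. rK \<in> covering_set n sK K \<and> rL \<in> covering_set m sL L \<and> rK + rL = r"
  shows "r \<in> covering_set (n + m) s (dsum K (shift n L))"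
proof -
  obtain rK rL where "rK \<in> covering_set n (min s n) K" "rL \<in> covering_set m (s - min s n) L"
    "rK + rL = r"
    using radii[of "min s n" "s - min s n"] s by fastforce
  then have "0 \<le> r" unfolding covering_set_def by auto
  moreover have "meets (n + m) r (dsum K (shift n L)) U" if U: "affsub (n + m) (n + m - s) U" for U
  proof -
    obtain k1 k2 UK where k: "k1 + k2 = n + m - s" and UK: "affsub n k1 UK"
      and fibre: "\<And>p. p \<in> UK \<Longrightarrow> \<exists>F. affsub m k2 F \<and> (\<forall>q\<in>F. append_coords n p q \<in> U)"
      using affsub_fibres[OF U] by blast
    have "k1 \<le> n" using UK by (rule affsub_le)
    moreover have "k2 \<le> m"
      using affsub_nonempty[OF UK] fibre affsub_le by blast
    ultimately obtain rK rL where rK: "rK \<in> covering_set n (n - k1) K"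
      and rL: "rL \<in> covering_set m (m - k2) L" and r: "rK + rL = r"
      using radii[of "n - k1" "m - k2"] k s by auto
    then obtain x z where x: "x \<in> K" "z \<in> Zn n" and p: "scale_fun rK x + z \<in> UK"
      using UK \<open>k1 \<le> n\<close> unfolding covering_set_def meets_def by auto
    then obtain F where F: "affsub m k2 F"
      and FU: "\<forall>q\<in>F. append_coords n (scale_fun rK x + z) q \<in> U"
      using fibre by blast
    obtain y z' where y: "y \<in> L" "z' \<in> Zn m" and q: "scale_fun rL y + z' \<in> F"
      using rL F \<open>k2 \<le> m\<close> unfolding covering_set_def meets_def by auto
    show ?thesis
      unfolding r[symmetric] using rK rL FU q
      by (intro meets_dsumI[OF K x(1) y(1) x(2) y(2)]) (auto simp: covering_set_def)
  qed
  ultimately show ?thesis unfolding covering_set_def by blast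
qed

lemma covering_set_dsum_lower:
  assumes K: "K \<subseteq> Rn n" and s: "sK \<le> n" "sL \<le> m"
    and UK: "affsub n (n - sK) UK" "\<And>\<mu>. 0 \<le> \<mu> \<Longrightarrow> \<mu> \<le> rK \<Longrightarrow> \<not> meets n \<mu> K UK"
    and UL: "affsub m (m - sL) UL" "\<And>\<mu>. 0 \<le> \<mu> \<Longrightarrow> \<mu> \<le> rL \<Longrightarrow> \<not> meets m \<mu> L UL"
    and \<mu>: "\<mu> \<le> rK + rL"
  shows "\<mu> \<notin> covering_set (n + m) (sK + sL) (dsum K (shift n L))"
proof
  assume cov: "\<mu> \<in> covering_set (n + m) (sK + sL) (dsum K (shift n L))"
  have "n - sK + (m - sL) = n + m - (sK + sL)" using s by simp
  then have "affsub (n + m) (n + m - (sK + sL)) ((\<lambda>(p, q). append_coords n p q) ` (UK \<times> UL))"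
    using affsub_append[OF UK(1) UL(1)] by simp
  then obtain \<tau> where \<tau>: "0 \<le> \<tau>" "\<tau> \<le> 1" and "meets n (\<mu> * \<tau>) K UK" "meets m (\<mu> * (1 - \<tau>)) L UL"
    using cov meets_dsumD[OF K affsub_subset_Rn[OF UK(1)]] unfolding covering_set_def by blast
  moreover have "0 \<le> \<mu>" using cov unfolding covering_set_def by simp
  ultimately have "rK < \<mu> * \<tau>" "rL < \<mu> * (1 - \<tau>)"
    using UK(2) UL(2) \<tau> by (meson mult_nonneg_nonneg not_le diff_ge_0_iff_ge)+
  then show False using \<mu> by (simp add: algebra_simps)
qed

lemma covmins_half_dsum_above:
  assumes K: "covmins_half n K" and L: "covmins_half m L" and s: "s \<le> n + m"
    and r: "real s / 2 < r"
  shows "r \<in> covering_set (n + m) s (dsum K (shift n L))"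
proof -
  define \<epsilon> where "\<epsilon> = (r - real s / 2) / 2"
  have "\<epsilon> > 0" using r by (simp add: \<epsilon>_def)
  have K_Rn: "K \<subseteq> Rn n" using K unfolding covmins_half_def by blast
  show ?thesis
  proof (rule covering_set_dsum_upper[OF K_Rn s])
    fix sK sL assume "sK \<le> n" "sL \<le> m" "sK + sL = s"
    then have "{real sK / 2<..} \<subseteq> covering_set n sK K" "{real sL / 2<..} \<subseteq> covering_set m sL L"
      using K L unfolding covmins_half_def by blast+
    then have "real sK / 2 + \<epsilon> \<in> covering_set n sK K" "real sL / 2 + \<epsilon> \<in> covering_set m sL L"
      using \<open>\<epsilon> > 0\<close> by auto
    moreover have "(real sK / 2 + \<epsilon>) + (real sL / 2 + \<epsilon>) = r"
      using \<open>sK + sL = s\<close> unfolding \<epsilon>_def by (simp add: field_simps flip: of_nat_add)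
    ultimately show "\<exists>rK rL. rK \<in> covering_set n sK K \<and> rL \<in> covering_set m sL L \<and> rK + rL = r"
      by blast
  qed
qed

lemma covmins_half_dsum_below:
  assumes K: "covmins_half n K" and L: "covmins_half m L" and s: "s \<le> n + m"
    and \<mu>: "\<mu> \<in> covering_set (n + m) s (dsum K (shift n L))"
  shows "real s / 2 \<le> \<mu>"
proof (rule ccontr)
  assume "\<not> real s / 2 \<le> \<mu>"
  define sK where "sK = min s n"
  define sL where "sL = s - sK"
  define \<epsilon> where "\<epsilon> = (real s / 2 - \<mu>) / 2"
  have sKL: "sK \<le> n" "sL \<le> m" "sK + sL = s" using s unfolding sK_def sL_def by auto
  have "\<epsilon> > 0" using \<open>\<not> real s / 2 \<le> \<mu>\<close> by (simp add: \<epsilon>_def)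
  obtain UK where "affsub n (n - sK) UK"
    "\<And>\<mu>'. 0 \<le> \<mu>' \<Longrightarrow> \<mu>' \<le> real sK / 2 - \<epsilon> \<Longrightarrow> \<not> meets n \<mu>' K UK"
    using covmins_half_missed[OF K sKL(1), of "real sK / 2 - \<epsilon>"] \<open>\<epsilon> > 0\<close> by auto
  moreover obtain UL where "affsub m (m - sL) UL"
    "\<And>\<mu>'. 0 \<le> \<mu>' \<Longrightarrow> \<mu>' \<le> real sL / 2 - \<epsilon> \<Longrightarrow> \<not> meets m \<mu>' L UL"
    using covmins_half_missed[OF L sKL(2), of "real sL / 2 - \<epsilon>"] \<open>\<epsilon> > 0\<close> by auto
  moreover have "\<mu> \<le> (real sK / 2 - \<epsilon>) + (real sL / 2 - \<epsilon>)"
    using sKL(3) unfolding \<epsilon>_def by (simp add: field_simps flip: of_nat_add)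
  moreover have "K \<subseteq> Rn n" using K unfolding covmins_half_def by blast
  ultimately have "\<mu> \<notin> covering_set (n + m) (sK + sL) (dsum K (shift n L))"
    using covering_set_dsum_lower sKL(1,2) by blast
  then show False using \<mu> sKL(3) by simp
qed

lemma covmins_half_dsum:
  assumes K: "covmins_half n K" and L: "covmins_half m L"
  shows "covmins_half (n + m) (dsum K (shift n L))"
proof -
  have KL: "K \<subseteq> Rn n" "L \<subseteq> Rn m" "star_shaped0 K" "star_shaped0 L"
    using K L unfolding covmins_half_def by auto
  have "dsum K (shift n L) \<subseteq> Rn (n + m)"
    using KL(1) shift_subset_Rn[OF KL(2)] by (intro dsum_subset_Rn) (auto simp: Rn_def)
  moreover have "star_shaped0 (dsum K (shift n L))"
    using KL(3,4) by (intro star_shaped0_dsum star_shaped0_shift)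
  ultimately show ?thesis
    unfolding covmins_half_def
    using covmins_half_dsum_above[OF K L] covmins_half_dsum_below[OF K L] by auto
qed

section \<open>Terminal simplices and terminal polytopes\<close>

lemma tsvert_sum_below:
  assumes "j < l" shows "(\<Sum>i\<le>l. c i * tsvert l i j) = c j - c l"
proof -
  have "(\<Sum>i\<le>l. c i * tsvert l i j) = (\<Sum>i<l. c i * tsvert l i j) + c l * tsvert l l j"
    by (simp add: lessThan_Suc_atMost[symmetric])
  also have "(\<Sum>i<l. c i * tsvert l i j) = (\<Sum>i<l. if i = j then c j else 0)"
    unfolding tsvert_def by (intro sum.cong) auto
  finally show ?thesis using assms by (simp add: tsvert_def)
qed

lemma tsvert_sum_above: "l \<le> j \<Longrightarrow> (\<Sum>i\<le>l. c i * tsvert l i j) = 0"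
  unfolding tsvert_def by (intro sum.neutral) auto

lemma tsimplex_subset_Rn: "tsimplex l \<subseteq> Rn l"
  unfolding tsimplex_def Rn_def using tsvert_sum_above by auto

lemma tsimplex_convex:
  assumes "x \<in> tsimplex l" "x' \<in> tsimplex l" "0 \<le> t" "t \<le> 1"
  shows "(\<lambda>j. t * x j + (1 - t) * x' j) \<in> tsimplex l"
proof -
  obtain c where c: "x = (\<lambda>j. \<Sum>i\<le>l. c i * tsvert l i j)" "\<forall>i\<le>l. c i \<ge> 0" "(\<Sum>i\<le>l. c i) = 1"
    using assms(1) unfolding tsimplex_def by blast
  obtain c' where c': "x' = (\<lambda>j. \<Sum>i\<le>l. c' i * tsvert l i j)" "\<forall>i\<le>l. c' i \<ge> 0" "(\<Sum>i\<le>l. c' i) = 1"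
    using assms(2) unfolding tsimplex_def by blast
  define d where "d i = t * c i + (1 - t) * c' i" for i
  have "(\<lambda>j. t * x j + (1 - t) * x' j) = (\<lambda>j. \<Sum>i\<le>l. d i * tsvert l i j)"
  proof
    fix j
    have "(\<Sum>i\<le>l. d i * tsvert l i j) =
        (\<Sum>i\<le>l. t * (c i * tsvert l i j) + (1 - t) * (c' i * tsvert l i j))"
      unfolding d_def by (intro sum.cong) (simp_all add: algebra_simps)
    then show "t * x j + (1 - t) * x' j = (\<Sum>i\<le>l. d i * tsvert l i j)"
      unfolding c(1) c'(1) by (simp add: sum.distrib sum_distrib_left)
  qed
  moreover have "\<forall>i\<le>l. d i \<ge> 0" using c(2) c'(2) assms(3,4) unfolding d_def by simp
  moreover have "(\<Sum>i\<le>l. d i) = 1" using c(3) c'(3) unfolding d_def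
    by (simp add: sum.distrib flip: sum_distrib_left)
  ultimately show ?thesis unfolding tsimplex_def by blast
qed

lemma tsimplex_contains_corner:
  assumes "x \<in> Rn l" "\<And>j. j < l \<Longrightarrow> 0 \<le> x j" "(\<Sum>j<l. x j) \<le> 1"
  shows "x \<in> tsimplex l"
proof -
  define b where "b = (1 - (\<Sum>j<l. x j)) / (real l + 1)"
  define c where "c i = (if i < l then x i + b else b)" for i
  have "b \<ge> 0" using assms(3) unfolding b_def by simp
  have "x = (\<lambda>j. \<Sum>i\<le>l. c i * tsvert l i j)"
  proof
    fix j show "x j = (\<Sum>i\<le>l. c i * tsvert l i j)"
      using assms(1)
      by (cases "j < l") (simp_all add: tsvert_sum_below tsvert_sum_above c_def Rn_def)
  qed
  moreover have "(\<Sum>i\<le>l. c i) = (\<Sum>i<l. x i) + (real l + 1) * b"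
    by (simp add: c_def sum.distrib lessThan_Suc_atMost[symmetric] algebra_simps)
  then have "(\<Sum>i\<le>l. c i) = 1" unfolding b_def by simp
  moreover have "\<forall>i\<le>l. c i \<ge> 0" using \<open>b \<ge> 0\<close> assms(2) unfolding c_def by simp
  ultimately show ?thesis unfolding tsimplex_def by blast
qed

text \<open>The scaled simplex \<open>l T\<^sub>l\<close> contains the unit cube, so \<open>l T\<^sub>l + \<int>\<^sup>l\<close> covers \<open>\<real>\<^sup>l\<close>.\<close>

lemma tsimplex_lattice_cover:
  assumes "1 \<le> l" "a \<in> Rn l"
  shows "\<exists>x\<in>tsimplex l. \<exists>z\<in>Zn l. scale_fun (real l) x + z = a"
proof -
  define z where "z j = (if j < l then of_int \<lfloor>a j\<rfloor> else 0 :: real)" for j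
  define x where "x j = (a j - z j) / real l" for j
  have frac: "0 \<le> a j - z j \<and> a j - z j \<le> 1" for j
    using assms(2) by (cases "j < l") (auto simp: z_def Rn_def of_int_floor_le, linarith)
  have "x \<in> Rn l" using assms(2) by (simp add: x_def z_def Rn_def)
  moreover have "0 \<le> x j" for j using frac by (simp add: x_def)
  moreover have "(\<Sum>j<l. x j) \<le> (\<Sum>j<l. 1 / real l)"
    using frac by (intro sum_mono) (simp add: x_def divide_right_mono)
  then have "(\<Sum>j<l. x j) \<le> 1" using assms(1) by simp
  ultimately have "x \<in> tsimplex l" by (intro tsimplex_contains_corner)
  moreover have "z \<in> Zn l" by (simp add: z_def Zn_def Rn_def)
  moreover have "scale_fun (real l) x + z = a"
    using assms(1) by (simp add: scale_fun_def x_def fun_eq_iff)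
  ultimately show ?thesis by blast
qed

lemma tsimplex_covering_set:
  assumes "1 \<le> l" shows "real l \<in> covering_set l s (tsimplex l)"
proof -
  have "meets l (real l) (tsimplex l) U" if U: "affsub l (l - s) U" for U
  proof -
    obtain a where "a \<in> U" using affsub_nonempty[OF U] by blast
    moreover have "a \<in> Rn l" using affsub_subset_Rn[OF U] \<open>a \<in> U\<close> by blast
    ultimately show ?thesis
      using tsimplex_lattice_cover[OF assms] unfolding meets_def by metis
  qed
  then show ?thesis unfolding covering_set_def by simp
qed

lemma covmins_half_terminal_simplex:
  assumes "1 \<le> l" "u \<in> Rn l" "0 \<in> transl u (tsimplex l)"
    and "\<forall>s\<in>{1..l}. covmin l s (tsimplex l) = real s / 2"
  shows "covmins_half l (transl u (tsimplex l))"
proof (rule covmins_halfI)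
  show "transl u (tsimplex l) \<subseteq> Rn l"
    using tsimplex_subset_Rn[of l] assms(2) unfolding transl_eq_image Rn_def
    by (fastforce simp: subset_iff)
  show "star_shaped0 (transl u (tsimplex l))"
    using tsimplex_convex assms(3) by (rule star_shaped0_transl)
  fix s assume "1 \<le> s" "s \<le> l"
  then show "covering_set l s (transl u (tsimplex l)) \<noteq> {} \<and>
      covmin l s (transl u (tsimplex l)) = real s / 2"
    using assms(4) tsimplex_covering_set[OF assms(1)]
    by (auto simp: covering_set_transl[OF assms(2)] covmin_eq_Inf)
qed

lemma tsum_shift: "tsum bs off = shift off (tsum bs 0)"
proof (induction bs arbitrary: off rule: induct_list012)
  case 1
  show ?case by (simp add: shift_eq_image append_coords_def zero_fun_def)
next
  case (2 b)
  then show ?case by (cases b) (simp add: shift_shift)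
next
  case (3 b1 b2 bs)
  obtain l u where "b1 = (l, u)" by fastforce
  then show ?case using "3.IH"(2)[of "off + l"] "3.IH"(2)[of l]
    by (simp add: shift_dsum shift_shift)
qed

lemma covmins_half_tsum:
  assumes "bs \<noteq> []" "\<forall>(l, u)\<in>set bs. covmins_half l (transl u (tsimplex l))"
  shows "covmins_half (sum_list (map fst bs)) (tsum bs 0)"
  using assms
proof (induction bs rule: induct_list012)
  case (2 b)
  then show ?case by (cases b) (simp add: shift_0)
next
  case (3 b1 b2 bs)
  obtain l u where b1: "b1 = (l, u)" by fastforce
  have "tsum (b1 # b2 # bs) 0 = dsum (transl u (tsimplex l)) (shift l (tsum (b2 # bs) 0))"
    using tsum_shift[of "b2 # bs" l] by (simp add: b1 shift_0)
  then show ?case using "3.IH"(2) "3.prems"(2) covmins_half_dsum b1 by auto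
qed simp

theorem corollary4p4:
  fixes d :: nat and T :: "(nat \<Rightarrow> real) set"
  assumes "\<forall>n\<le>d. \<forall>s\<in>{1..n}. covmin n s (tsimplex n) = real s / 2"
    and "terminal_polytope d T"
  shows "\<forall>i\<in>{1..d}. covmin d i T = real i / 2"
proof -
  obtain bs where bs: "bs \<noteq> []" "sum_list (map fst bs) = d" "T = tsum bs 0"
    and blocks: "\<forall>(l, u) \<in> set bs. l \<ge> 1 \<and> u \<in> Zn l \<and> (\<lambda>j. 0) \<in> transl u (tsimplex l)"
    using assms(2) unfolding terminal_polytope_def by blast
  have "covmins_half l (transl u (tsimplex l))" if lu: "(l, u) \<in> set bs" for l u
  proof (rule covmins_half_terminal_simplex)
    show "1 \<le> l" "u \<in> Rn l" "0 \<in> transl u (tsimplex l)"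
      using blocks lu by (auto simp: Zn_def zero_fun_def)
    have "l \<le> d" using member_le_sum_list[of l "map fst bs"] lu bs(2) by force
    then show "\<forall>s\<in>{1..l}. covmin l s (tsimplex l) = real s / 2" using assms(1) by blast
  qed
  then have "covmins_half d T" using covmins_half_tsum[OF bs(1)] bs(2,3) by auto
  then show ?thesis using covmin_covmins_half by auto
qed

end
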